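(* Let $S\ni h$ be a polarized lattice. For any pair $\Delta',\Delta''$ of Weyl chambers for $\operatorname{rt}(S,h)$, there are canonical isomorphisms $\operatorname{Fn}_{\Delta'}(S,h)\cong\operatorname{Fn}_{\Delta''}(S,h)$ and $\operatorname{Fex}_{\Delta'}(S,h)\cong\operatorname{Fex}_{\Delta''}(S,h)$.
   Context: All lattices are even and nondegenerate. A polarized lattice is $(S,h)$ with $S$ hyperbolic and $h^2>0$. $\operatorname{root}_n(S,h)=\{r\in S: r^2=-2,\ r\cdot h=n\}$; $\operatorname{rt}(S,h)$ is the root lattice generated by $\operatorname{root}_0(S,h)$. A Weyl chamber $\Delta$ is determined by its positive roots $P_\Delta$, and $\mathfrak{b}(\Delta)$ is its set of simple (indecomposable positive) roots, called exceptional divisors. The Fano graph $\operatorname{Fn}_\Delta(S,h)=\{l\in\operatorname{root}_1(S,h): l\cdot e\ge0\ \forall e\in\mathfrak{b}(\Delta)\}$ has edges of multiplicity $l_1\cdot l_2$ between distinct vertices. The extended Fano graph $\operatorname{Fex}_\Delta(S,h)=\operatorname{Fn}_\Delta(S,h)\cup\mathfrak{b}(\Delta)$ has the same edge convention and vertices colored by $v\cdot h\in\{0,1\}$; isomorphisms are of (bi-colored) graphs. *)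

theory Defs
  imports "HOL-Analysis.Analysis"
begin

text \<open>A lattice of rank CARD('n) is modelled as int^'n with integral Gram matrix Q.\<close>

definition bf :: "int^'n^'n \<Rightarrow> int^'n \<Rightarrow> int^'n \<Rightarrow> int" where
  "bf Q x y = (\<Sum>i\<in>UNIV. \<Sum>j\<in>UNIV. x$i * Q$i$j * y$j)"

definition bfR :: "int^'n^'n \<Rightarrow> real^'n \<Rightarrow> real^'n \<Rightarrow> real" where
  "bfR Q x y = (\<Sum>i\<in>UNIV. \<Sum>j\<in>UNIV. x$i * of_int (Q$i$j) * y$j)"

definition rvec :: "int^'n \<Rightarrow> real^'n" where
  "rvec x = (\<chi> i. of_int (x$i))"

definition even_lattice :: "int^'n^'n \<Rightarrow> bool" where
  "even_lattice Q \<longleftrightarrow> (\<forall>i j. Q$i$j = Q$j$i) \<and> (\<forall>i. even (Q$i$i))"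

definition nondegenerate :: "int^'n^'n \<Rightarrow> bool" where
  "nondegenerate Q \<longleftrightarrow> det Q \<noteq> 0"

text \<open>Hyperbolic: signature (1, rank-1), i.e. positive index of inertia equal to 1.\<close>
definition hyperbolic :: "int^'n^'n \<Rightarrow> bool" where
  "hyperbolic Q \<longleftrightarrow> even_lattice Q \<and> nondegenerate Q \<and>
     (\<exists>v. bfR Q v v > 0) \<and>
     (\<forall>u w. bfR Q u u > 0 \<and> bfR Q u w = 0 \<longrightarrow> bfR Q w w \<le> 0)"

definition polarized :: "int^'n^'n \<Rightarrow> int^'n \<Rightarrow> bool" where
  "polarized Q h \<longleftrightarrow> hyperbolic Q \<and> bf Q h h > 0"

definition roots_n :: "int^'n^'n \<Rightarrow> int^'n \<Rightarrow> int \<Rightarrow> (int^'n) set" where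
  "roots_n Q h n = {r. bf Q r r = -2 \<and> bf Q r h = n}"

text \<open>A Weyl chamber of rt(S,h) (a component of the complement of the root hyperplanes
  in rt(S,h) tensor R), represented by its set of positive roots.\<close>
definition weyl_chamber :: "int^'n^'n \<Rightarrow> int^'n \<Rightarrow> (int^'n) set \<Rightarrow> bool" where
  "weyl_chamber Q h P \<longleftrightarrow> (\<exists>v \<in> span (rvec ` roots_n Q h 0).
      (\<forall>r\<in>roots_n Q h 0. bfR Q (rvec r) v \<noteq> 0) \<and>
      P = {r \<in> roots_n Q h 0. bfR Q (rvec r) v > 0})"

definition simple_roots :: "(int^'n) set \<Rightarrow> (int^'n) set" where
  "simple_roots P = {r \<in> P. \<not> (\<exists>a\<in>P. \<exists>b\<in>P. r = a + b)}"

definition fano :: "int^'n^'n \<Rightarrow> int^'n \<Rightarrow> (int^'n) set \<Rightarrow> (int^'n) set" where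
  "fano Q h P = {l \<in> roots_n Q h 1. \<forall>e\<in>simple_roots P. bf Q l e \<ge> 0}"

definition fano_ext :: "int^'n^'n \<Rightarrow> int^'n \<Rightarrow> (int^'n) set \<Rightarrow> (int^'n) set" where
  "fano_ext Q h P = fano Q h P \<union> simple_roots P"

text \<open>Isomorphism of graphs whose edge multiplicities are given by the form.\<close>
definition graph_iso :: "int^'n^'n \<Rightarrow> (int^'n) set \<Rightarrow> (int^'n) set \<Rightarrow> (int^'n \<Rightarrow> int^'n) \<Rightarrow> bool" where
  "graph_iso Q V1 V2 f \<longleftrightarrow> bij_betw f V1 V2 \<and>
     (\<forall>x\<in>V1. \<forall>y\<in>V1. x \<noteq> y \<longrightarrow> bf Q (f x) (f y) = bf Q x y)"

text \<open>Isomorphism of bi-coloured graphs (colour of v is v.h).\<close>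
definition colored_graph_iso :: "int^'n^'n \<Rightarrow> int^'n \<Rightarrow> (int^'n) set \<Rightarrow> (int^'n) set \<Rightarrow> (int^'n \<Rightarrow> int^'n) \<Rightarrow> bool" where
  "colored_graph_iso Q h V1 V2 f \<longleftrightarrow> graph_iso Q V1 V2 f \<and>
     (\<forall>x\<in>V1. bf Q (f x) h = bf Q x h)"

definition refl_root :: "int^'n^'n \<Rightarrow> int^'n \<Rightarrow> int^'n \<Rightarrow> int^'n" where
  "refl_root Q r x = x + (bf Q x r) *s r"

inductive_set weyl_group :: "int^'n^'n \<Rightarrow> int^'n \<Rightarrow> (int^'n \<Rightarrow> int^'n) set"
  for Q h where
  id: "id \<in> weyl_group Q h"
| step: "w \<in> weyl_group Q h \<Longrightarrow> r \<in> roots_n Q h 0 \<Longrightarrow> refl_root Q r \<circ> w \<in> weyl_group Q h"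

end

theory Submission
  imports Defs
begin

text \<open>Every element of the Weyl group is an isometry of the lattice fixing h, so it preserves
  root_0 and root_1, intersection numbers and colours, and carries the simple roots of a chamber
  to those of the image chamber; hence it maps Fano graphs isomorphically onto Fano graphs.
  It therefore suffices that the Weyl group acts transitively on chambers. As S is hyperbolic
  and h^2 > 0, the orthogonal complement of h is negative definite, so root_0 is finite and
  two roots a \<noteq> \<plusminus>b satisfy |a\<cdot>b| \<le> 1. Consequently the reflection in a simple root a
  of a chamber permutes its positive roots other than a and sends a to -a. If two chambers
  differ, some simple root of the second is negative for the first (positive roots are sums of
  simple ones), and reflecting in it lowers the number of roots on which the two chambers
  disagree.\<close>

section \<open>The bilinear forms\<close>

lemma bf_sym: "even_lattice Q \<Longrightarrow> bf Q x y = bf Q y x"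
  unfolding bf_def even_lattice_def
  by (subst sum.swap) (simp add: mult.commute mult.left_commute)

lemma bf_add_left: "bf Q (x + y) z = bf Q x z + bf Q y z"
  unfolding bf_def by (simp add: algebra_simps sum.distrib)

lemma bf_add_right: "bf Q z (x + y) = bf Q z x + bf Q z y"
  unfolding bf_def by (simp add: algebra_simps sum.distrib)

lemma bf_diff_left: "bf Q (x - y) z = bf Q x z - bf Q y z"
  unfolding bf_def by (simp add: algebra_simps sum_subtractf)

lemma bf_diff_right: "bf Q z (x - y) = bf Q z x - bf Q z y"
  unfolding bf_def by (simp add: algebra_simps sum_subtractf)

lemma bf_minus_left: "bf Q (- x) z = - bf Q x z"
  unfolding bf_def by (simp add: sum_negf)

lemma bf_minus_right: "bf Q z (- x) = - bf Q z x"
  unfolding bf_def by (simp add: sum_negf)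

lemma bf_smult_left: "bf Q (c *s x) z = c * bf Q x z"
  unfolding bf_def by (simp add: sum_distrib_left algebra_simps)

lemma bf_smult_right: "bf Q z (c *s x) = c * bf Q z x"
  unfolding bf_def by (simp add: sum_distrib_left algebra_simps)

lemma bfR_sym: "even_lattice Q \<Longrightarrow> bfR Q x y = bfR Q y x"
  unfolding bfR_def even_lattice_def
  by (subst sum.swap) (simp add: mult.commute mult.left_commute)

lemma bfR_add_left: "bfR Q (x + y) z = bfR Q x z + bfR Q y z"
  unfolding bfR_def by (simp add: algebra_simps sum.distrib)

lemma bfR_add_right: "bfR Q z (x + y) = bfR Q z x + bfR Q z y"
  unfolding bfR_def by (simp add: algebra_simps sum.distrib)

lemma bfR_diff_left: "bfR Q (x - y) z = bfR Q x z - bfR Q y z"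
  unfolding bfR_def by (simp add: algebra_simps sum_subtractf)

lemma bfR_diff_right: "bfR Q z (x - y) = bfR Q z x - bfR Q z y"
  unfolding bfR_def by (simp add: algebra_simps sum_subtractf)

lemma bfR_minus_left: "bfR Q (- x) z = - bfR Q x z"
  unfolding bfR_def by (simp add: sum_negf)

lemma bfR_scaleR_left: "bfR Q (c *\<^sub>R x) z = c * bfR Q x z"
  unfolding bfR_def by (simp add: sum_distrib_left algebra_simps)

lemma bfR_scaleR_right: "bfR Q z (c *\<^sub>R x) = c * bfR Q z x"
  unfolding bfR_def by (simp add: sum_distrib_left algebra_simps)

lemma continuous_on_bfR_left: "continuous_on S (\<lambda>x. bfR Q x y)"
  unfolding bfR_def by (intro continuous_intros)

lemma continuous_on_bfR_diag: "continuous_on S (\<lambda>x. bfR Q x x)"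
  unfolding bfR_def by (intro continuous_intros)

lemma rvec_add: "rvec (x + y) = rvec x + rvec y"
  unfolding rvec_def by (simp add: vec_eq_iff)

lemma rvec_minus: "rvec (- x) = - rvec x"
  unfolding rvec_def by (simp add: vec_eq_iff)

lemma rvec_smult: "rvec (c *s x) = of_int c *\<^sub>R rvec x"
  unfolding rvec_def by (simp add: vec_eq_iff)

lemma rvec_eq_0_iff: "rvec x = 0 \<longleftrightarrow> x = 0"
  unfolding rvec_def by (simp add: vec_eq_iff)

lemma bfR_rvec: "bfR Q (rvec x) (rvec y) = of_int (bf Q x y)"
  unfolding bfR_def bf_def rvec_def by simp

lemma bfR_rvec_add_left: "bfR Q (rvec (x + y)) v = bfR Q (rvec x) v + bfR Q (rvec y) v"
  by (simp add: rvec_add bfR_add_left)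

section \<open>The orthogonal complement of h\<close>

lemma nondegenerate_bfR_radical:
  fixes Q :: "int^'n^'n"
  assumes "nondegenerate Q" and orth: "\<And>x. bfR Q y x = 0"
  shows "y = 0"
proof -
  define M where "M = (\<chi> i j. of_int (Q$i$j) :: real^'n^'n)"
  have "(y v* M)$j = bfR Q y (axis j 1)" for j
    unfolding M_def vector_matrix_mult_def bfR_def axis_def by (simp add: if_distrib cong: if_cong)
  hence "transpose M *v y = 0"
    using orth by (simp add: vec_eq_iff)
  moreover have "det (transpose M) = of_int (det Q)"
    unfolding det_transpose by (simp add: M_def det_def)
  hence "det (transpose M) \<noteq> 0"
    using assms(1) unfolding nondegenerate_def by simp
  ultimately show "y = 0"
    using invertible_det_nz matrix_left_invertible_ker unfolding invertible_def by blast
qed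

lemma polarized_even_lattice: "polarized Q h \<Longrightarrow> even_lattice Q"
  unfolding polarized_def hyperbolic_def by blast

lemma polarized_bfR_perp_nonpos:
  assumes "polarized Q h" and "bfR Q x (rvec h) = 0"
  shows "bfR Q x x \<le> 0"
proof -
  have "bfR Q (rvec h) (rvec h) > 0"
    using assms(1) unfolding polarized_def by (simp add: bfR_rvec)
  moreover have "bfR Q (rvec h) x = 0"
    using assms bfR_sym unfolding polarized_def hyperbolic_def by metis
  ultimately show ?thesis
    using assms(1) unfolding polarized_def hyperbolic_def by blast
qed

lemma isotropic_orthogonal_if_nonpos:
  assumes "even_lattice Q"
    and nonpos: "\<And>x. bfR Q x u = 0 \<Longrightarrow> bfR Q x x \<le> 0"
    and y: "bfR Q y u = 0" "bfR Q y y = 0" and z: "bfR Q z u = 0"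
  shows "bfR Q y z = 0"
proof (rule ccontr)
  define c where "c = bfR Q y z"
  define d where "d = bfR Q z z"
  define t where "t = c / (1 - d)"
  assume "bfR Q y z \<noteq> 0"
  hence "c \<noteq> 0" by (simp add: c_def)
  have "d \<le> 0" using nonpos[OF z] by (simp add: d_def)
  have "bfR Q (y + t *\<^sub>R z) u = 0"
    using y z by (simp add: bfR_add_left bfR_scaleR_left)
  hence "bfR Q (y + t *\<^sub>R z) (y + t *\<^sub>R z) \<le> 0" by (rule nonpos)
  moreover have "bfR Q (y + t *\<^sub>R z) (y + t *\<^sub>R z) = 2 * t * c + t^2 * d"
    using y bfR_sym[OF assms(1), of z y]
    by (simp add: bfR_add_left bfR_add_right bfR_scaleR_left bfR_scaleR_right c_def d_def
        power2_eq_square algebra_simps)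
  moreover have "c = t * (1 - d)"
    using \<open>d \<le> 0\<close> by (simp add: t_def)
  hence "2 * t * c + t^2 * d = t^2 * (2 - d)"
    by (simp only:) (simp add: power2_eq_square algebra_simps)
  moreover have "t^2 * (2 - d) > 0"
    using \<open>c \<noteq> 0\<close> \<open>d \<le> 0\<close> by (simp add: t_def)
  ultimately show False by linarith
qed

lemma polarized_bfR_perp_neg:
  assumes pol: "polarized Q h" and y: "bfR Q y (rvec h) = 0" "y \<noteq> 0"
  shows "bfR Q y y < 0"
proof (rule ccontr)
  assume "\<not> bfR Q y y < 0"
  hence yy: "bfR Q y y = 0"
    using polarized_bfR_perp_nonpos[OF pol y(1)] by simp
  have ev: "even_lattice Q" by (rule polarized_even_lattice[OF pol])
  have nondeg: "nondegenerate Q" using pol unfolding polarized_def hyperbolic_def by blast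
  have hh: "bfR Q (rvec h) (rvec h) > 0"
    using pol unfolding polarized_def by (simp add: bfR_rvec)
  \<comment> \<open>an isotropic vector of the complement of h is orthogonal to it and to h, hence radical\<close>
  have "bfR Q y x = 0" for x
  proof -
    define s where "s = bfR Q x (rvec h) / bfR Q (rvec h) (rvec h)"
    have "bfR Q (x - s *\<^sub>R rvec h) (rvec h) = 0"
      using hh by (simp add: bfR_diff_left bfR_scaleR_left s_def)
    hence "bfR Q y (x - s *\<^sub>R rvec h) = 0"
      using isotropic_orthogonal_if_nonpos[OF ev polarized_bfR_perp_nonpos[OF pol] y(1) yy]
      by blast
    thus ?thesis
      using y(1) bfR_sym[OF ev, of y "rvec h"] by (simp add: bfR_diff_right bfR_scaleR_right)
  qed
  hence "y = 0" by (rule nondegenerate_bfR_radical[OF nondeg])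
  with y(2) show False ..
qed

lemma polarized_bf_perp_neg:
  assumes "polarized Q h" and "bf Q x h = 0" and "x \<noteq> 0"
  shows "bf Q x x < 0"
  using polarized_bfR_perp_neg[of Q h "rvec x"] assms by (simp add: bfR_rvec rvec_eq_0_iff)

lemma finite_int_vec_box: "finite {x :: int^'n. \<forall>i. \<bar>x$i\<bar> \<le> B}"
proof -
  have "{x :: int^'n. \<forall>i. \<bar>x$i\<bar> \<le> B} \<subseteq> vec_lambda ` (UNIV \<rightarrow>\<^sub>E {-B..B})"
  proof
    fix x :: "int^'n"
    assume "x \<in> {x. \<forall>i. \<bar>x$i\<bar> \<le> B}"
    hence "restrict (vec_nth x) UNIV \<in> UNIV \<rightarrow>\<^sub>E {-B..B}" by (force simp: abs_le_iff)
    moreover have "x = vec_lambda (restrict (vec_nth x) UNIV)" by (simp add: vec_eq_iff)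
    ultimately show "x \<in> vec_lambda ` (UNIV \<rightarrow>\<^sub>E {-B..B})" by blast
  qed
  thus ?thesis by (rule finite_subset) (simp add: finite_PiE)
qed

lemma polarized_bfR_perp_le_norm:
  assumes pol: "polarized Q h"
  obtains c where "c > 0" and "\<And>x. bfR Q x (rvec h) = 0 \<Longrightarrow> bfR Q x x \<le> - c * (norm x)^2"
proof -
  define K where "K = {x. bfR Q x (rvec h) = 0} \<inter> sphere 0 1"
  have "\<exists>c>0. \<forall>u\<in>K. bfR Q u u \<le> - c"
  proof (cases "K = {}")
    case False
    have "compact K"
      unfolding K_def by (intro closed_Int_compact closed_Collect_eq continuous_on_bfR_left)
        (auto intro: continuous_on_const)
    then obtain u0 where u0: "u0 \<in> K" "\<forall>u\<in>K. bfR Q u u \<le> bfR Q u0 u0"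
      using continuous_attains_sup[OF _ False continuous_on_bfR_diag] by blast
    have "bfR Q u0 u0 < 0"
      using u0(1) polarized_bfR_perp_neg[OF pol] unfolding K_def by fastforce
    thus ?thesis using u0 by (intro exI[of _ "- bfR Q u0 u0"]) auto
  qed (auto intro: exI[of _ 1])
  then obtain c where c: "c > 0" "\<forall>u\<in>K. bfR Q u u \<le> - c" by blast
  have "bfR Q x x \<le> - c * (norm x)^2" if x: "bfR Q x (rvec h) = 0" for x
  proof (cases "x = 0")
    case False
    define u where "u = (1 / norm x) *\<^sub>R x"
    have "u \<in> K" using x False unfolding K_def u_def by (simp add: bfR_scaleR_left)
    moreover have "bfR Q x x = (norm x)^2 * bfR Q u u"
      using False by (simp add: u_def bfR_scaleR_left bfR_scaleR_right power2_eq_square)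
    moreover have "bfR Q u u \<le> - c" using \<open>u \<in> K\<close> c(2) by blast
    ultimately show ?thesis
      by (metis mult_left_mono zero_le_power2 mult.commute)
  qed (simp add: bfR_def)
  with c(1) show ?thesis by (rule that)
qed

lemma finite_roots_n_0:
  assumes pol: "polarized Q h"
  shows "finite (roots_n Q h 0)"
proof -
  obtain c where c: "c > 0" "\<And>x. bfR Q x (rvec h) = 0 \<Longrightarrow> bfR Q x x \<le> - c * (norm x)^2"
    using polarized_bfR_perp_le_norm[OF pol] by blast
  define B where "B = \<lceil>1 + 2 / c\<rceil>"
  have "roots_n Q h 0 \<subseteq> {x. \<forall>i. \<bar>x$i\<bar> \<le> B}"
  proof (intro subsetI CollectI allI)
    fix r i assume r: "r \<in> roots_n Q h 0"
    hence "c * (norm (rvec r))^2 \<le> 2"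
      using c(2)[of "rvec r"] unfolding roots_n_def by (simp add: bfR_rvec)
    hence "(norm (rvec r))^2 \<le> 2 / c" using c(1) by (simp add: field_simps)
    moreover have "norm (rvec r) \<le> 1 + (norm (rvec r))^2"
      by (smt (verit) power2_eq_square mult_le_cancel_left1 norm_ge_zero zero_le_square)
    moreover have "\<bar>rvec r $ i\<bar> \<le> norm (rvec r)" by (rule component_le_norm_cart)
    ultimately have "real_of_int \<bar>r$i\<bar> \<le> 1 + 2 / c" by (simp add: rvec_def)
    thus "\<bar>r$i\<bar> \<le> B" unfolding B_def by linarith
  qed
  thus ?thesis using finite_int_vec_box finite_subset by blast
qed

section \<open>Reflections and the Weyl group\<close>

lemma refl_root_add: "refl_root Q a (x + y) = refl_root Q a x + refl_root Q a y"
  unfolding refl_root_def by (simp add: bf_add_left)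

lemma refl_root_self: "bf Q a a = -2 \<Longrightarrow> refl_root Q a a = - a"
  unfolding refl_root_def by (simp add: vec_eq_iff)

lemma refl_root_involutive: "bf Q a a = -2 \<Longrightarrow> refl_root Q a (refl_root Q a x) = x"
  unfolding refl_root_def by (simp add: bf_add_left bf_smult_left vec_eq_iff algebra_simps)

lemma bij_refl_root: "bf Q a a = -2 \<Longrightarrow> bij (refl_root Q a)"
  by (rule bij_betw_byWitness[where f' = "refl_root Q a"]) (auto simp: refl_root_involutive)

lemma refl_root_bf:
  assumes "even_lattice Q" and "bf Q a a = -2"
  shows "bf Q (refl_root Q a x) (refl_root Q a y) = bf Q x y"
  using assms bf_sym[OF assms(1), of y a] unfolding refl_root_def
  by (simp add: bf_add_left bf_add_right bf_smult_left bf_smult_right algebra_simps)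

lemma refl_root_in_weyl_group: "a \<in> roots_n Q h 0 \<Longrightarrow> refl_root Q a \<in> weyl_group Q h"
  using weyl_group.step[OF weyl_group.id] by simp

lemma weyl_group_add: "w \<in> weyl_group Q h \<Longrightarrow> w (x + y) = w x + w y"
  by (induction rule: weyl_group.induct) (simp_all add: refl_root_add)

lemma weyl_group_bij: "w \<in> weyl_group Q h \<Longrightarrow> bij w"
proof (induction rule: weyl_group.induct)
  case (step w r)
  thus ?case by (intro bij_comp bij_refl_root) (simp_all add: roots_n_def)
qed (rule bij_id)

lemma weyl_group_bf:
  assumes "even_lattice Q"
  shows "w \<in> weyl_group Q h \<Longrightarrow> bf Q (w x) (w y) = bf Q x y"
proof (induction rule: weyl_group.induct)
  case (step w r)
  thus ?case using refl_root_bf[OF assms, of r] by (simp add: roots_n_def)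
qed simp

lemma weyl_group_fixes:
  assumes "even_lattice Q"
  shows "w \<in> weyl_group Q h \<Longrightarrow> w h = h"
proof (induction rule: weyl_group.induct)
  case (step w r)
  hence "bf Q h r = 0" using bf_sym[OF assms, of h r] by (simp add: roots_n_def)
  with step show ?case by (simp add: refl_root_def)
qed simp

lemma weyl_group_roots_n_iff:
  assumes "even_lattice Q" and "w \<in> weyl_group Q h"
  shows "w x \<in> roots_n Q h n \<longleftrightarrow> x \<in> roots_n Q h n"
proof -
  have "bf Q (w x) (w x) = bf Q x x" and "bf Q (w x) h = bf Q x h"
    using weyl_group_bf[OF assms(1) assms(2), of x] weyl_group_bf[OF assms(1) assms(2), of x h]
      weyl_group_fixes[OF assms(1) assms(2)] by simp_all
  thus ?thesis by (simp add: roots_n_def)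
qed

section \<open>Chambers and positive roots\<close>

definition regular_vector :: "int^'n^'n \<Rightarrow> int^'n \<Rightarrow> real^'n \<Rightarrow> bool" where
  "regular_vector Q h v \<longleftrightarrow> (\<forall>r\<in>roots_n Q h 0. bfR Q (rvec r) v \<noteq> 0)"

definition positive_roots :: "int^'n^'n \<Rightarrow> int^'n \<Rightarrow> real^'n \<Rightarrow> (int^'n) set" where
  "positive_roots Q h v = {r \<in> roots_n Q h 0. bfR Q (rvec r) v > 0}"

text \<open>weyl_chamber also asks v to lie in the span of the roots; nothing below needs that.\<close>

lemma weyl_chamberE:
  assumes "weyl_chamber Q h P"
  obtains v where "regular_vector Q h v" and "P = positive_roots Q h v"
  using assms unfolding weyl_chamber_def regular_vector_def positive_roots_def by blast

lemma minus_roots_n: "r \<in> roots_n Q h n \<Longrightarrow> - r \<in> roots_n Q h (- n)"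
  unfolding roots_n_def by (simp add: bf_minus_left bf_minus_right)

lemma minus_in_positive_roots:
  assumes "regular_vector Q h v" and "r \<in> roots_n Q h 0" and "r \<notin> positive_roots Q h v"
  shows "- r \<in> positive_roots Q h v"
  using assms minus_roots_n[of r Q h 0]
  unfolding regular_vector_def positive_roots_def by (auto simp: rvec_minus bfR_minus_left)

lemma minus_notin_positive_roots: "r \<in> positive_roots Q h v \<Longrightarrow> - r \<notin> positive_roots Q h v"
  unfolding positive_roots_def by (auto simp: rvec_minus bfR_minus_left)

lemma positive_roots_eq_if_subset:
  assumes "regular_vector Q h v" and "positive_roots Q h v \<subseteq> positive_roots Q h v'"
  shows "positive_roots Q h v = positive_roots Q h v'"
proof (rule ccontr)
  assume "positive_roots Q h v \<noteq> positive_roots Q h v'"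
  then obtain r where r: "r \<in> positive_roots Q h v'" "r \<notin> positive_roots Q h v"
    using assms(2) by blast
  hence "- r \<in> positive_roots Q h v'"
    using assms minus_in_positive_roots[OF assms(1)] unfolding positive_roots_def by blast
  with r(1) show False using minus_notin_positive_roots by blast
qed

lemma bfR_rvec_refl_root:
  assumes "even_lattice Q"
  shows "bfR Q (rvec (refl_root Q a r)) v = bfR Q (rvec r) (v + bfR Q v (rvec a) *\<^sub>R rvec a)"
  using bfR_sym[OF assms, of "rvec a" v] unfolding refl_root_def
  by (simp add: rvec_add rvec_smult bfR_add_left bfR_add_right bfR_scaleR_left bfR_scaleR_right
      bfR_rvec)

lemma refl_root_roots_n_iff:
  assumes "even_lattice Q" and "a \<in> roots_n Q h 0"
  shows "refl_root Q a r \<in> roots_n Q h n \<longleftrightarrow> r \<in> roots_n Q h n"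
  using weyl_group_roots_n_iff[OF assms(1) refl_root_in_weyl_group[OF assms(2)]] .

lemma image_refl_root_positive_roots:
  assumes "even_lattice Q" and a: "a \<in> roots_n Q h 0"
  shows "refl_root Q a ` positive_roots Q h v
    = positive_roots Q h (v + bfR Q v (rvec a) *\<^sub>R rvec a)"
proof -
  have aa: "bf Q a a = -2" using a by (simp add: roots_n_def)
  have "refl_root Q a ` positive_roots Q h v = {r. refl_root Q a r \<in> positive_roots Q h v}"
    using refl_root_involutive[OF aa] by (auto simp: image_iff) metis
  thus ?thesis
    unfolding positive_roots_def
    by (simp add: refl_root_roots_n_iff[OF assms] bfR_rvec_refl_root[OF assms(1)])
qed

lemma regular_vector_refl:
  assumes "even_lattice Q" and "a \<in> roots_n Q h 0" and "regular_vector Q h v"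
  shows "regular_vector Q h (v + bfR Q v (rvec a) *\<^sub>R rvec a)"
  using assms(3) unfolding regular_vector_def
  by (metis refl_root_roots_n_iff[OF assms(1,2)] bfR_rvec_refl_root[OF assms(1)])

lemma positive_roots_subset_if_simple_roots_subset:
  assumes fin: "finite (roots_n Q h 0)"
    and simple: "simple_roots (positive_roots Q h v) \<subseteq> positive_roots Q h v'"
  shows "positive_roots Q h v \<subseteq> positive_roots Q h v'"
proof (rule ccontr)
  let ?P = "positive_roots Q h v" and ?P' = "positive_roots Q h v'"
  let ?f = "\<lambda>r. bfR Q (rvec r) v"
  define S where "S = ?P - ?P'"
  assume "\<not> ?P \<subseteq> ?P'"
  hence "S \<noteq> {}" and "finite S"
    using fin unfolding S_def positive_roots_def by (auto intro: finite_subset)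
  \<comment> \<open>a counterexample of minimal height is a sum of two positive roots of smaller height\<close>
  define b where "b = arg_min_on ?f S"
  have b: "b \<in> S" and b_min: "\<And>x. x \<in> S \<Longrightarrow> \<not> ?f x < ?f b"
    using arg_min_if_finite[OF \<open>finite S\<close> \<open>S \<noteq> {}\<close>, of ?f] unfolding b_def by auto
  hence "b \<notin> simple_roots ?P" using simple unfolding S_def by blast
  then obtain x y where xy: "x \<in> ?P" "y \<in> ?P" "b = x + y"
    using b unfolding S_def simple_roots_def by blast
  have "?f x > 0" "?f y > 0" "?f b = ?f x + ?f y"
    using xy unfolding positive_roots_def by (auto simp: bfR_rvec_add_left)
  hence "x \<in> ?P'" and "y \<in> ?P'"
    using xy b_min unfolding S_def by fastforce+
  hence "b \<in> ?P'"
    using b xy unfolding S_def positive_roots_def by (auto simp: bfR_rvec_add_left)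
  with b show False unfolding S_def by blast
qed

lemma abs_bf_roots_le_1:
  assumes pol: "polarized Q h" and a: "a \<in> roots_n Q h 0" and b: "b \<in> roots_n Q h 0"
    and "b \<noteq> a" and "b \<noteq> - a"
  shows "\<bar>bf Q a b\<bar> \<le> 1"
proof -
  have ev: "even_lattice Q" by (rule polarized_even_lattice[OF pol])
  \<comment> \<open>(b \<mp> a)^2 = -4 \<mp> 2 a\<cdot>b, and b \<mp> a is a nonzero vector orthogonal to h\<close>
  have "b - a \<noteq> 0" and "b + a \<noteq> 0"
    using assms(4,5) by (auto simp: add_eq_0_iff)
  moreover have "bf Q (b - a) h = 0" and "bf Q (b + a) h = 0"
    using a b by (simp_all add: roots_n_def bf_diff_left bf_add_left)
  ultimately have "bf Q (b - a) (b - a) < 0" and "bf Q (b + a) (b + a) < 0"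
    using polarized_bf_perp_neg[OF pol] by blast+
  thus ?thesis
    using a b bf_sym[OF ev, of b a]
    by (simp add: roots_n_def bf_diff_left bf_diff_right bf_add_left bf_add_right)
qed

lemma refl_simple_root_positive_root:
  assumes pol: "polarized Q h" and reg: "regular_vector Q h v"
    and a: "a \<in> simple_roots (positive_roots Q h v)"
    and b: "b \<in> positive_roots Q h v" "b \<noteq> a"
  shows "refl_root Q a b \<in> positive_roots Q h v"
proof -
  let ?P = "positive_roots Q h v"
  have aP: "a \<in> ?P" using a unfolding simple_roots_def by blast
  have aR: "a \<in> roots_n Q h 0" and bR: "b \<in> roots_n Q h 0"
    using aP b(1) unfolding positive_roots_def by auto
  have ev: "even_lattice Q" by (rule polarized_even_lattice[OF pol])
  have "b \<noteq> - a" using minus_notin_positive_roots[OF aP] b(1) by blast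
  hence "\<bar>bf Q a b\<bar> \<le> 1" by (rule abs_bf_roots_le_1[OF pol aR bR b(2)])
  hence "bf Q b a \<in> {-1, 0, 1}" using bf_sym[OF ev, of b a] by auto
  then consider "bf Q b a = 0" | "bf Q b a = 1" | "bf Q b a = -1" by blast
  thus ?thesis
  proof cases
    case 1
    thus ?thesis using b(1) by (simp add: refl_root_def)
  next
    case 2
    hence "refl_root Q a b = b + a" and "b + a \<in> roots_n Q h 0"
      using aR bR bf_sym[OF ev, of a b]
      by (simp_all add: refl_root_def roots_n_def bf_add_left bf_add_right)
    thus ?thesis using aP b(1) unfolding positive_roots_def by (auto simp: bfR_rvec_add_left)
  next
    case 3
    hence sb: "refl_root Q a b = b - a" and "b - a \<in> roots_n Q h 0"
      using aR bR bf_sym[OF ev, of a b]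
      by (simp_all add: refl_root_def roots_n_def bf_diff_left bf_diff_right vec_eq_iff)
    show ?thesis
    proof (rule ccontr)
      assume "refl_root Q a b \<notin> ?P"
      hence "a - b \<in> ?P"
        using minus_in_positive_roots[OF reg \<open>b - a \<in> roots_n Q h 0\<close>] sb by simp
      moreover have "a = (a - b) + b" by simp
      ultimately show False using a b(1) unfolding simple_roots_def by blast
    qed
  qed
qed

lemma image_refl_simple_root_positive_roots:
  assumes pol: "polarized Q h" and reg: "regular_vector Q h v"
    and a: "a \<in> simple_roots (positive_roots Q h v)"
  shows "refl_root Q a ` positive_roots Q h v = insert (- a) (positive_roots Q h v - {a})"
proof -
  let ?P = "positive_roots Q h v" and ?s = "refl_root Q a"
  have aP: "a \<in> ?P" using a unfolding simple_roots_def by blast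
  hence aa: "bf Q a a = -2" unfolding positive_roots_def roots_n_def by simp
  have maps_to: "?s b \<in> ?P - {a}" if "b \<in> ?P - {a}" for b
  proof -
    have "?s b \<noteq> a"
    proof
      assume "?s b = a"
      hence "?s (?s b) = ?s a" by simp
      hence "b = - a" by (simp add: refl_root_involutive[OF aa] refl_root_self[OF aa])
      thus False using that minus_notin_positive_roots[OF aP] by blast
    qed
    thus ?thesis using refl_simple_root_positive_root[OF pol reg a] that by blast
  qed
  have fixed: "?s ` (?P - {a}) = ?P - {a}"
  proof
    show "?s ` (?P - {a}) \<subseteq> ?P - {a}" by (rule image_subsetI) (rule maps_to)
    show "?P - {a} \<subseteq> ?s ` (?P - {a})"
    proof
      fix x assume x: "x \<in> ?P - {a}"
      have "x = ?s (?s x)" by (simp add: refl_root_involutive[OF aa])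
      thus "x \<in> ?s ` (?P - {a})" using maps_to[OF x] by (rule image_eqI)
    qed
  qed
  have "?s ` ?P = ?s ` insert a (?P - {a})" by (simp only: insert_Diff[OF aP])
  also have "\<dots> = insert (- a) (?P - {a})"
    by (simp only: image_insert fixed refl_root_self[OF aa])
  finally show ?thesis .
qed

lemma weyl_group_transitive_positive_roots:
  assumes pol: "polarized Q h" and reg1: "regular_vector Q h v1"
  shows "regular_vector Q h v2
    \<Longrightarrow> \<exists>w\<in>weyl_group Q h. w ` positive_roots Q h v1 = positive_roots Q h v2"
proof (induction "card (positive_roots Q h v1 - positive_roots Q h v2)" arbitrary: v2
    rule: less_induct)
  case less
  let ?P1 = "positive_roots Q h v1" and ?P2 = "positive_roots Q h v2"
  have ev: "even_lattice Q" by (rule polarized_even_lattice[OF pol])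
  have fin: "finite (roots_n Q h 0)" by (rule finite_roots_n_0[OF pol])
  show ?case
  proof (cases "?P1 = ?P2")
    case True
    with weyl_group.id show ?thesis by (intro bexI[of _ id]) simp_all
  next
    case False
    hence "\<not> ?P2 \<subseteq> ?P1" using positive_roots_eq_if_subset[OF less.prems] by blast
    hence "\<not> simple_roots ?P2 \<subseteq> ?P1"
      using positive_roots_subset_if_simple_roots_subset[OF fin] by blast
    then obtain a where a: "a \<in> simple_roots ?P2" "a \<notin> ?P1" by blast
    have aP2: "a \<in> ?P2" using a(1) unfolding simple_roots_def by blast
    hence aR: "a \<in> roots_n Q h 0" and aa: "bf Q a a = -2"
      unfolding positive_roots_def roots_n_def by auto
    let ?s = "refl_root Q a" and ?v = "v2 + bfR Q v2 (rvec a) *\<^sub>R rvec a"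
    have img: "?s ` ?P2 = positive_roots Q h ?v"
      by (rule image_refl_root_positive_roots[OF ev aR])
    \<comment> \<open>reflecting P2 in a simple root that is negative for P1 removes exactly -a from P1 - P2\<close>
    have "?P1 - ?s ` ?P2 = (?P1 - ?P2) - {- a}"
      unfolding image_refl_simple_root_positive_roots[OF pol less.prems a(1)] using a(2) by auto
    moreover have "- a \<in> ?P1 - ?P2"
      using minus_in_positive_roots[OF reg1 aR a(2)] minus_notin_positive_roots[OF aP2] by blast
    moreover have "finite (?P1 - ?P2)"
      using fin unfolding positive_roots_def by auto
    ultimately have "card (?P1 - positive_roots Q h ?v) < card (?P1 - ?P2)"
      unfolding img[symmetric] by (metis card_Diff1_less)
    then obtain w where w: "w \<in> weyl_group Q h" "w ` ?P1 = positive_roots Q h ?v"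
      using less.hyps regular_vector_refl[OF ev aR less.prems] by blast
    have "(?s \<circ> w) ` ?P1 = ?s ` ?s ` ?P2" by (simp only: image_comp[symmetric] w(2) img)
    also have "\<dots> = ?P2" by (simp add: image_image refl_root_involutive[OF aa])
    finally show ?thesis by (intro bexI[of _ "?s \<circ> w"] weyl_group.step[OF w(1) aR])
  qed
qed

section \<open>Fano graphs\<close>

lemma simple_roots_image:
  assumes inj: "inj f" and add: "\<And>x y. f (x + y) = f x + f y"
  shows "simple_roots (f ` P) = f ` simple_roots P"
proof -
  have sum_iff: "f r = f a + f b \<longleftrightarrow> r = a + b" for r a b
    by (simp add: add[symmetric] inj_eq[OF inj])
  show ?thesis unfolding simple_roots_def by (auto simp: sum_iff)
qed

lemma weyl_group_image_simple_roots:
  "w \<in> weyl_group Q h \<Longrightarrow> simple_roots (w ` P) = w ` simple_roots P"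
  by (rule simple_roots_image[OF bij_is_inj[OF weyl_group_bij] weyl_group_add])

lemma weyl_group_image_fano:
  assumes ev: "even_lattice Q" and w: "w \<in> weyl_group Q h"
  shows "w ` fano Q h P = fano Q h (w ` P)"
proof -
  have "fano Q h P = w -` fano Q h (w ` P)"
    unfolding fano_def weyl_group_image_simple_roots[OF w]
    by (auto simp: weyl_group_roots_n_iff[OF ev w] weyl_group_bf[OF ev w])
  thus ?thesis by (simp add: surj_image_vimage_eq bij_is_surj[OF weyl_group_bij[OF w]])
qed

lemma weyl_group_image_fano_ext:
  "even_lattice Q \<Longrightarrow> w \<in> weyl_group Q h \<Longrightarrow> w ` fano_ext Q h P = fano_ext Q h (w ` P)"
  unfolding fano_ext_def by (simp add: image_Un weyl_group_image_fano weyl_group_image_simple_roots)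

lemma weyl_group_colored_graph_iso:
  assumes ev: "even_lattice Q" and w: "w \<in> weyl_group Q h"
  shows "colored_graph_iso Q h V (w ` V) w"
proof -
  have "bf Q (w x) h = bf Q x h" for x
    using weyl_group_bf[OF ev w, of x h] weyl_group_fixes[OF ev w] by simp
  moreover have "bij_betw w V (w ` V)"
    using bij_is_inj[OF weyl_group_bij[OF w]] by (simp add: bij_betw_imageI inj_on_subset)
  ultimately show ?thesis
    unfolding colored_graph_iso_def graph_iso_def by (simp add: weyl_group_bf[OF ev w])
qed

theorem lemma2p3:
  fixes Q :: "int^'n^'n" and h :: "int^'n" and P1 P2 :: "(int^'n) set"
  assumes "polarized Q h"
    and "weyl_chamber Q h P1"
    and "weyl_chamber Q h P2"
  shows "\<exists>w\<in>weyl_group Q h. w ` P1 = P2 \<and>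
           graph_iso Q (fano Q h P1) (fano Q h P2) w \<and>
           colored_graph_iso Q h (fano_ext Q h P1) (fano_ext Q h P2) w"
proof -
  have ev: "even_lattice Q" by (rule polarized_even_lattice[OF assms(1)])
  obtain v1 where v1: "regular_vector Q h v1" "P1 = positive_roots Q h v1"
    using assms(2) by (rule weyl_chamberE)
  obtain v2 where v2: "regular_vector Q h v2" "P2 = positive_roots Q h v2"
    using assms(3) by (rule weyl_chamberE)
  obtain w where w: "w \<in> weyl_group Q h" "w ` P1 = P2"
    using weyl_group_transitive_positive_roots[OF assms(1) v1(1) v2(1)] v1(2) v2(2) by blast
  have "colored_graph_iso Q h (fano Q h P1) (fano Q h P2) w"
    using weyl_group_colored_graph_iso[OF ev w(1)] weyl_group_image_fano[OF ev w(1)] w(2) by metis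
  moreover have "colored_graph_iso Q h (fano_ext Q h P1) (fano_ext Q h P2) w"
    using weyl_group_colored_graph_iso[OF ev w(1)] weyl_group_image_fano_ext[OF ev w(1)] w(2)
    by metis
  ultimately show ?thesis using w unfolding colored_graph_iso_def by blast
qed

end
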